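(* Let $f:\mathbb R^n\to\mathbb R$ be a metric function. Then every gradient line of $f$ (i.e. every non-stationary trajectory of $\dot x=\operatorname{grad} f(x)$) has curvature identically zero; that is, it lies on a straight line.
   Context: A metric function on a manifold $M$ is a function $f\in C^2(M,\mathbb R)$ such that the length of its gradient $|\operatorname{grad} f|$ is constant on each connected component of each level set of $f$. A gradient line of $f$ is a trajectory of the system $\dot x=\operatorname{grad}f(x)$. *)

theory Defs
  imports "HOL-Analysis.Analysis"
begin

definition is_gradient :: "('a::euclidean_space \<Rightarrow> real) \<Rightarrow> ('a \<Rightarrow> 'a) \<Rightarrow> bool" where
  "is_gradient f g \<longleftrightarrow> (\<forall>x. (f has_derivative (\<lambda>h. g x \<bullet> h)) (at x))"

definition C2_with_gradient :: "('a::euclidean_space \<Rightarrow> real) \<Rightarrow> ('a \<Rightarrow> 'a) \<Rightarrow> bool" where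
  "C2_with_gradient f g \<longleftrightarrow> is_gradient f g \<and>
     (\<exists>H :: 'a \<Rightarrow> ('a \<Rightarrow>\<^sub>L 'a).
        (\<forall>x. (g has_derivative blinfun_apply (H x)) (at x)) \<and> continuous_on UNIV H)"

definition metric_function :: "('a::euclidean_space \<Rightarrow> real) \<Rightarrow> ('a \<Rightarrow> 'a) \<Rightarrow> bool" where
  "metric_function f g \<longleftrightarrow> C2_with_gradient f g \<and>
     (\<forall>c. \<forall>x y. x \<in> {z. f z = c} \<and> y \<in> connected_component_set {z. f z = c} x
        \<longrightarrow> norm (g y) = norm (g x))"

definition gradient_line :: "('a::euclidean_space \<Rightarrow> 'a) \<Rightarrow> real set \<Rightarrow> (real \<Rightarrow> 'a) \<Rightarrow> bool" where
  "gradient_line g I \<gamma> \<longleftrightarrow> is_interval I \<and>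
     (\<forall>t\<in>I. (\<gamma> has_vector_derivative g (\<gamma> t)) (at t within I))"

end

theory Submission
  imports Defs
begin

text \<open>
  Let \<open>H\<close> be the Hessian of \<open>f\<close>, i.e. the derivative of the gradient \<open>g\<close>.  The proof has
  three parts.
  (1) The gradient is an eigenvector of the Hessian: \<open>H x (g x) = \<mu>(x) g x\<close>.  At a regular
      point, a vector \<open>v \<bottom> g x\<close> is tangent to a curve inside the level set through \<open>x\<close>
      (a scalar implicit function argument); \<open>|g|\<close> is constant along this curve, so
      \<open>g x \<bullet> H x v = 0\<close>.  Symmetry of the Hessian then gives \<open>H x (g x) \<bullet> v = 0\<close> for all
      such \<open>v\<close>.  Symmetry is proved from scratch via second differences.
  (2) Along a gradient line \<open>\<gamma>\<close> the gradient \<open>G = g \<circ> \<gamma>\<close> solves \<open>G' = \<mu>(\<gamma>) G\<close>, hence so does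
      its component \<open>P\<close> orthogonal to \<open>G(t\<^sub>0)\<close>.  A Gronwall argument for \<open>|P|\<^sup>2\<close>, which
      vanishes at \<open>t\<^sub>0\<close>, shows \<open>P = 0\<close>: the velocity of \<open>\<gamma>\<close> keeps a fixed direction.
  (3) A curve whose velocity is always parallel to a fixed vector lies on a line.
\<close>

lemma derivative_along_line:
  assumes fd: "\<And>y. (f has_derivative (\<lambda>h. g y \<bullet> h)) (at y)"
  shows "((\<lambda>r. f (p + r *\<^sub>R u)) has_real_derivative (g (p + r *\<^sub>R u) \<bullet> u)) (at r)"
proof -
  have "((\<lambda>r. p + r *\<^sub>R u) has_derivative (\<lambda>h. h *\<^sub>R u)) (at r)"
    by (auto intro!: derivative_eq_intros)
  from has_derivative_compose[OF this fd]
  have "((\<lambda>r. f (p + r *\<^sub>R u)) has_derivative (\<lambda>h. g (p + r *\<^sub>R u) \<bullet> (h *\<^sub>R u))) (at r)"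
    by (simp add: o_def)
  then show ?thesis
    by (simp add: has_field_derivative_def mult_commute_abs)
qed

lemma linearization_error_on_ball:
  fixes g :: "'a::real_normed_vector \<Rightarrow> 'b::real_normed_vector" and H :: "'a \<Rightarrow> ('a \<Rightarrow>\<^sub>L 'b)"
  assumes gd: "\<And>y. (g has_derivative blinfun_apply (H y)) (at y)"
    and H_near: "\<And>z. z \<in> ball x d \<Longrightarrow> norm (H z - H x) \<le> e"
    and y: "y \<in> ball x d" "y + w \<in> ball x d"
  shows "norm (g (y + w) - g y - H x w) \<le> norm w * e"
proof -
  have "norm (g (y + w) - g y - H x (y + w - y)) \<le> norm (y + w - y) * e"
  proof (rule differentiable_bound_linearization[where S="ball x d" and f'="\<lambda>y. blinfun_apply (H y)"])
    fix t :: real assume "t \<in> {0..1}"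
    then have "(1 - t) *\<^sub>R y + t *\<^sub>R (y + w) \<in> ball x d"
      using y by (intro convexD_alt) auto
    then show "y + t *\<^sub>R (y + w - y) \<in> ball x d"
      by (simp add: algebra_simps)
  next
    fix z assume "z \<in> ball x d"
    then show "onorm (blinfun_apply (H z) - blinfun_apply (H x)) \<le> e"
      using H_near by (simp add: norm_blinfun.rep_eq minus_blinfun.rep_eq fun_diff_def)
  next
    show "x \<in> ball x d"
      using le_less_trans[OF zero_le_dist y(1)[unfolded mem_ball]] by simp
  qed (rule has_derivative_at_withinI[OF gd])
  then show ?thesis
    by simp
qed

text \<open>By the mean value theorem in the
  direction \<open>u\<close>, it reduces to a gradient increment in the direction \<open>s w\<close>.\<close>
lemma second_difference_estimate:
  fixes f :: "'a::euclidean_space \<Rightarrow> real" and g :: "'a \<Rightarrow> 'a" and H :: "'a \<Rightarrow> ('a \<Rightarrow>\<^sub>L 'a)"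
  assumes fd: "\<And>y. (f has_derivative (\<lambda>h. g y \<bullet> h)) (at y)"
    and gd: "\<And>y. (g has_derivative blinfun_apply (H y)) (at y)"
    and H_near: "\<And>z. z \<in> ball x d \<Longrightarrow> norm (H z - H x) \<le> e"
    and s: "0 < s" "s * (norm u + norm w) < d"
  shows "\<bar>f (x + s *\<^sub>R w + s *\<^sub>R u) - f (x + s *\<^sub>R u) - f (x + s *\<^sub>R w) + f x
           - s\<^sup>2 * (H x w \<bullet> u)\<bar> \<le> e * s\<^sup>2 * norm u * norm w"
proof -
  define \<phi> where "\<phi> r = f (x + s *\<^sub>R w + r *\<^sub>R u) - f (x + r *\<^sub>R u) - r * s * (H x w \<bullet> u)" for r
  define \<phi>' where "\<phi>' r = g (x + s *\<^sub>R w + r *\<^sub>R u) \<bullet> u - g (x + r *\<^sub>R u) \<bullet> u - s * (H x w \<bullet> u)" for r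
  have "(\<phi> has_real_derivative \<phi>' r) (at r)" for r
    unfolding \<phi>_def \<phi>'_def by (auto intro!: derivative_eq_intros derivative_along_line[OF fd])
  then obtain z where z: "0 < z" "z < s" "\<phi> s - \<phi> 0 = s * \<phi>' z"
    using MVT2[of 0 s \<phi> \<phi>'] s by auto
  have in_ball: "x + (a *\<^sub>R u + b *\<^sub>R w) \<in> ball x d" if "0 \<le> a" "a \<le> s" "0 \<le> b" "b \<le> s" for a b
  proof -
    have "norm (a *\<^sub>R u + b *\<^sub>R w) \<le> a * norm u + b * norm w"
      using norm_triangle_ineq[of "a *\<^sub>R u" "b *\<^sub>R w"] that by simp
    also have "\<dots> \<le> s * norm u + s * norm w"
      using that by (intro add_mono mult_right_mono) auto
    finally have "norm (a *\<^sub>R u + b *\<^sub>R w) < d"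
      using s by (simp add: algebra_simps)
    then show ?thesis
      by (metis add_0_right dist_add_cancel dist_0_norm mem_ball)
  qed
  have "x + z *\<^sub>R u + s *\<^sub>R w \<in> ball x d" "x + z *\<^sub>R u \<in> ball x d"
    using in_ball[of z s] in_ball[of z 0] z s by (simp_all add: add.assoc)
  then have "norm (g (x + z *\<^sub>R u + s *\<^sub>R w) - g (x + z *\<^sub>R u) - H x (s *\<^sub>R w)) \<le> norm (s *\<^sub>R w) * e"
    using linearization_error_on_ball[OF gd H_near] by (metis add.assoc)
  then have increment: "norm (g (x + z *\<^sub>R u + s *\<^sub>R w) - g (x + z *\<^sub>R u) - s *\<^sub>R H x w) \<le> s * norm w * e"
    using s by (simp add: blinfun.scaleR_right)
  have "\<bar>\<phi>' z\<bar> = \<bar>(g (x + z *\<^sub>R u + s *\<^sub>R w) - g (x + z *\<^sub>R u) - s *\<^sub>R H x w) \<bullet> u\<bar>"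
    unfolding \<phi>'_def by (simp add: algebra_simps inner_diff_left)
  also have "\<dots> \<le> s * norm w * e * norm u"
    using Cauchy_Schwarz_ineq2 increment by (rule order_trans[OF _ mult_right_mono]) simp
  finally have "\<bar>\<phi> s - \<phi> 0\<bar> \<le> s * (s * norm w * e * norm u)"
    using z s by (simp add: abs_mult mult_left_mono)
  moreover have "\<phi> s - \<phi> 0 = f (x + s *\<^sub>R w + s *\<^sub>R u) - f (x + s *\<^sub>R u) - f (x + s *\<^sub>R w) + f x
           - s\<^sup>2 * (H x w \<bullet> u)"
    unfolding \<phi>_def by (simp add: power2_eq_square)
  ultimately show ?thesis
    by (simp add: power2_eq_square algebra_simps)
qed

text \<open>Quantitative symmetry of the Hessian: the second difference is symmetric in \<open>u\<close> and
  \<open>w\<close>, so the estimate above, applied with a step \<open>s\<close> small enough to stay in the ball, bounds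
  the asymmetry of \<open>H x\<close> by twice the oscillation of the Hessian.\<close>
lemma hessian_asymmetry_bound:
  fixes f :: "'a::euclidean_space \<Rightarrow> real" and g :: "'a \<Rightarrow> 'a" and H :: "'a \<Rightarrow> ('a \<Rightarrow>\<^sub>L 'a)"
  assumes fd: "\<And>y. (f has_derivative (\<lambda>h. g y \<bullet> h)) (at y)"
    and gd: "\<And>y. (g has_derivative blinfun_apply (H y)) (at y)"
    and H_near: "\<And>z. z \<in> ball x d \<Longrightarrow> norm (H z - H x) \<le> e" and "d > 0"
  shows "\<bar>H x w \<bullet> u - H x u \<bullet> w\<bar> \<le> e * (2 * norm u * norm w)"
proof -
  define N where "N = norm u + norm w + 1"
  define s where "s = d / N"
  have N: "N > 0"
    unfolding N_def using norm_ge_zero[of u] norm_ge_zero[of w] by linarith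
  then have s0: "0 < s" and "s * N = d"
    unfolding s_def using \<open>d > 0\<close> by simp_all
  then have s1: "s * (norm u + norm w) < d" and s2: "s * (norm w + norm u) < d"
    unfolding N_def distrib_left mult_1_right by linarith+
  have "x + s *\<^sub>R u + s *\<^sub>R w = x + s *\<^sub>R w + s *\<^sub>R u"
    by (simp add: algebra_simps)
  then have "\<bar>s\<^sup>2 * (H x w \<bullet> u - H x u \<bullet> w)\<bar> \<le> s\<^sup>2 * (e * (2 * norm u * norm w))"
    using second_difference_estimate[OF fd gd H_near s0 s1]
      second_difference_estimate[OF fd gd H_near s0 s2]
    by (simp add: algebra_simps)
  then show ?thesis
    using s0 by (simp add: abs_mult)
qed

text \<open>Schwarz's theorem: the Hessian of a \<open>C\<^sup>2\<close> function is symmetric, since by continuity of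
  the Hessian the oscillation in the previous bound can be made arbitrarily small.\<close>
lemma hessian_symmetric:
  fixes f :: "'a::euclidean_space \<Rightarrow> real" and g :: "'a \<Rightarrow> 'a" and H :: "'a \<Rightarrow> ('a \<Rightarrow>\<^sub>L 'a)"
  assumes fd: "\<And>y. (f has_derivative (\<lambda>h. g y \<bullet> h)) (at y)"
    and gd: "\<And>y. (g has_derivative blinfun_apply (H y)) (at y)"
    and H_cont: "continuous_on UNIV H"
  shows "H x w \<bullet> u = H x u \<bullet> w"
proof -
  define K where "K = 2 * norm u * norm w"
  have small: "\<bar>H x w \<bullet> u - H x u \<bullet> w\<bar> \<le> e * K" if "e > 0" for e
  proof -
    have "isCont H x"
      using H_cont by (simp add: continuous_on_eq_continuous_at)
    then obtain d where d: "d > 0" and near: "\<And>z. z \<in> ball x d \<Longrightarrow> norm (H z - H x) \<le> e"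
      using \<open>e > 0\<close> unfolding continuous_at_eps_delta
      by (metis dist_commute dist_norm less_imp_le mem_ball)
    show ?thesis
      unfolding K_def by (rule hessian_asymmetry_bound[OF fd gd near d])
  qed
  have K0: "K \<ge> 0"
    unfolding K_def by simp
  have "\<bar>H x w \<bullet> u - H x u \<bullet> w\<bar> \<le> 0"
  proof (rule field_le_epsilon)
    fix e :: real assume "e > 0"
    then have "\<bar>H x w \<bullet> u - H x u \<bullet> w\<bar> \<le> e / (K + 1) * K"
      using K0 by (intro small) simp
    also have "\<dots> \<le> 0 + e"
      using \<open>e > 0\<close> K0 by (simp add: field_simps)
    finally show "\<bar>H x w \<bullet> u - H x u \<bullet> w\<bar> \<le> 0 + e" .
  qed
  then show ?thesis
    by simp
qed

lemma expanding_from_growth: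
  fixes \<phi> :: "real \<Rightarrow> real"
  assumes grow: "\<And>t1 t2. t1 \<in> J \<Longrightarrow> t2 \<in> J \<Longrightarrow> t1 \<le> t2 \<Longrightarrow> (t2 - t1) * k \<le> \<phi> t2 - \<phi> t1"
    and "t \<in> J" "t' \<in> J"
  shows "\<bar>t - t'\<bar> * k \<le> \<bar>\<phi> t - \<phi> t'\<bar>"
proof (cases "t \<le> t'")
  case True
  then show ?thesis
    using grow[of t t'] assms(2,3) by (simp add: abs_minus_commute)
next
  case False
  then show ?thesis
    using grow[of t' t] assms(2,3) by simp
qed

text \<open>A root function of a continuous equation \<open>F s t = c\<close> is continuous when the roots are
  unique in a compact range, since its graph is closed.\<close>
lemma continuous_implicit_root:
  fixes F :: "real \<Rightarrow> real \<Rightarrow> real" and \<tau> :: "real \<Rightarrow> real"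
  assumes F_cont: "continuous_on UNIV (\<lambda>p. F (fst p) (snd p))"
    and "closed S" "compact T"
    and root: "\<And>s. s \<in> S \<Longrightarrow> \<tau> s \<in> T \<and> F s (\<tau> s) = c"
    and unique: "\<And>s t. s \<in> S \<Longrightarrow> t \<in> T \<Longrightarrow> F s t = c \<Longrightarrow> t = \<tau> s"
  shows "continuous_on S \<tau>"
proof (rule continuous_from_closed_graph[OF \<open>compact T\<close>])
  show "\<tau> \<in> S \<rightarrow> T"
    using root by blast
  have "(\<lambda>s. (s, \<tau> s)) ` S = (S \<times> T) \<inter> {p. F (fst p) (snd p) = c}"
    using root unique by fastforce
  moreover have "closed ((S \<times> T) \<inter> {p. F (fst p) (snd p) = c})"
    using \<open>closed S\<close> compact_imp_closed[OF \<open>compact T\<close>] F_cont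
    by (intro closed_Int closed_Times closed_Collect_eq continuous_on_const)
  ultimately show "closed ((\<lambda>s. (s, \<tau> s)) ` S)"
    by simp
qed

lemma zero_derivative_by_domination:
  fixes \<phi> \<tau> :: "real \<Rightarrow> real"
  assumes \<phi>: "(\<phi> has_real_derivative 0) (at 0)"
    and "k > 0" "\<delta> > 0" "\<tau> 0 = 0"
    and dom: "\<And>s. \<bar>s\<bar> < \<delta> \<Longrightarrow> \<bar>\<tau> s\<bar> * k \<le> \<bar>\<phi> s - \<phi> 0\<bar>"
  shows "(\<tau> has_real_derivative 0) (at 0)"
  unfolding has_field_derivative_iff
proof (rule Lim_null_comparison)
  have "((\<lambda>s. (\<phi> s - \<phi> 0) / (s - 0)) \<longlongrightarrow> 0) (at 0)"
    using \<phi> unfolding has_field_derivative_iff .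
  then show "((\<lambda>s. \<bar>(\<phi> s - \<phi> 0) / (s - 0)\<bar> / k) \<longlongrightarrow> 0) (at 0)"
    using tendsto_divide_zero[OF tendsto_rabs_zero] by blast
  show "\<forall>\<^sub>F s in at 0. norm ((\<tau> s - \<tau> 0) / (s - 0)) \<le> \<bar>(\<phi> s - \<phi> 0) / (s - 0)\<bar> / k"
    unfolding eventually_at
  proof (intro exI[of _ \<delta>] conjI ballI impI)
    fix s :: real assume "s \<noteq> 0 \<and> dist s 0 < \<delta>"
    then have "\<bar>\<tau> s\<bar> / \<bar>s\<bar> \<le> \<bar>\<phi> s - \<phi> 0\<bar> / k / \<bar>s\<bar>"
      using dom[of s] \<open>k > 0\<close> by (intro divide_right_mono) (auto simp: field_simps)
    then show "norm ((\<tau> s - \<tau> 0) / (s - 0)) \<le> \<bar>(\<phi> s - \<phi> 0) / (s - 0)\<bar> / k"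
      using \<open>\<tau> 0 = 0\<close> by (simp add: field_simps)
  qed (use \<open>\<delta> > 0\<close> in simp)
qed

lemma continuous_on_slices:
  fixes F :: "'a::topological_space \<Rightarrow> 'b::topological_space \<Rightarrow> 'c::topological_space"
  assumes F_cont: "continuous_on UNIV (\<lambda>p. F (fst p) (snd p))"
  shows "continuous_on UNIV (\<lambda>s. F s t)" "continuous_on UNIV (F s)"
proof -
  have "continuous_on UNIV (\<lambda>s. F (fst (s, t)) (snd (s, t)))"
    "continuous_on UNIV (\<lambda>t. F (fst (s, t)) (snd (s, t)))"
    by (rule continuous_on_compose2[OF F_cont]; auto intro!: continuous_intros)+
  then show "continuous_on UNIV (\<lambda>s. F s t)" "continuous_on UNIV (F s)"
    by simp_all
qed

lemma strict_inequalities_persist: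
  fixes \<phi> \<psi> :: "real \<Rightarrow> real"
  assumes "isCont \<phi> 0" "isCont \<psi> 0" "\<phi> 0 < c" "c < \<psi> 0" "\<epsilon> > 0"
  shows "\<exists>\<delta>>0. \<delta> \<le> \<epsilon> \<and> (\<forall>s\<in>{-\<delta>..\<delta>}. \<phi> s < c \<and> c < \<psi> s)"
proof -
  have "\<forall>\<^sub>F s in at 0. \<phi> s < c \<and> c < \<psi> s"
    using assms unfolding isCont_def by (intro eventually_conj order_tendstoD) auto
  then obtain d where d: "d > 0" and near: "\<And>s. s \<noteq> 0 \<Longrightarrow> \<bar>s\<bar> < d \<Longrightarrow> \<phi> s < c \<and> c < \<psi> s"
    unfolding eventually_at by (auto simp: dist_real_def)
  have "\<phi> s < c \<and> c < \<psi> s" if "s \<in> {-min \<epsilon> (d / 2)..min \<epsilon> (d / 2)}" for s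
    using near[of s] that assms(3,4) d by (cases "s = 0") auto
  then show ?thesis
    using d assms(5) by (intro exI[of _ "min \<epsilon> (d / 2)"]) auto
qed

text \<open>A scalar implicit function theorem.\<close>
lemma implicit_function_flat:
  fixes F :: "real \<Rightarrow> real \<Rightarrow> real"
  assumes F_cont: "continuous_on UNIV (\<lambda>p. F (fst p) (snd p))"
    and k: "k > 0" and \<epsilon>: "\<epsilon> > 0"
    and grow: "\<And>s t1 t2. \<bar>s\<bar> \<le> \<epsilon> \<Longrightarrow> -\<epsilon> \<le> t1 \<Longrightarrow> t1 \<le> t2 \<Longrightarrow> t2 \<le> \<epsilon> \<Longrightarrow>
                 (t2 - t1) * k \<le> F s t2 - F s t1"
    and flat: "((\<lambda>s. F s 0) has_real_derivative 0) (at 0)"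
  shows "\<exists>\<delta>>0. \<exists>\<tau>. continuous_on {-\<delta>..\<delta>} \<tau> \<and> \<tau> 0 = 0 \<and> (\<tau> has_real_derivative 0) (at 0) \<and>
           (\<forall>s\<in>{-\<delta>..\<delta>}. F s (\<tau> s) = F 0 0)"
proof -
  define c where "c = F 0 0"
  note cont_s = continuous_on_slices(1)[OF F_cont]
  note cont_t = continuous_on_subset[OF continuous_on_slices(2)[OF F_cont] subset_UNIV]
  text \<open>The sign change of \<open>F 0\<close> across \<open>\<plusminus>\<epsilon>\<close> persists for nearby \<open>s\<close>.\<close>
  have "F 0 (-\<epsilon>) < c" "c < F 0 \<epsilon>"
    using grow[of 0 "-\<epsilon>" 0] grow[of 0 0 \<epsilon>] mult_pos_pos[OF \<epsilon> k] \<epsilon> unfolding c_def by auto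
  then obtain \<delta> where \<delta>: "\<delta> > 0" "\<delta> \<le> \<epsilon>"
    and sign: "\<And>s. s \<in> {-\<delta>..\<delta>} \<Longrightarrow> F s (-\<epsilon>) < c \<and> c < F s \<epsilon>"
    using strict_inequalities_persist[of "\<lambda>s. F s (-\<epsilon>)" "\<lambda>s. F s \<epsilon>" c \<epsilon>] cont_s \<epsilon>
    by (auto simp: continuous_on_eq_continuous_at)
  have "\<exists>t. t \<in> {-\<epsilon>..\<epsilon>} \<and> F s t = c" if "s \<in> {-\<delta>..\<delta>}" for s
    using IVT'[of "F s" "-\<epsilon>" c \<epsilon>] sign[OF that] cont_t \<epsilon> by force
  then obtain \<tau> where root: "\<And>s. s \<in> {-\<delta>..\<delta>} \<Longrightarrow> \<tau> s \<in> {-\<epsilon>..\<epsilon>} \<and> F s (\<tau> s) = c"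
    by metis
  have expand: "\<bar>t - t'\<bar> * k \<le> \<bar>F s t - F s t'\<bar>"
    if "s \<in> {-\<delta>..\<delta>}" "t \<in> {-\<epsilon>..\<epsilon>}" "t' \<in> {-\<epsilon>..\<epsilon>}" for s t t'
    using that \<delta> by (intro expanding_from_growth[where J="{-\<epsilon>..\<epsilon>}"] grow) auto
  have unique: "t = \<tau> s" if "s \<in> {-\<delta>..\<delta>}" "t \<in> {-\<epsilon>..\<epsilon>}" "F s t = c" for s t
    using expand[OF that(1,2), of "\<tau> s"] root[OF that(1)] that(3) k
    by (simp add: mult_le_0_iff)
  have \<tau>0: "\<tau> 0 = 0"
    using unique[of 0 0] \<delta> \<epsilon> unfolding c_def by simp
  have "continuous_on {-\<delta>..\<delta>} \<tau>"
    using root unique by (intro continuous_implicit_root[OF F_cont, where T="{-\<epsilon>..\<epsilon>}"]) auto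
  moreover have "(\<tau> has_real_derivative 0) (at 0)"
  proof (rule zero_derivative_by_domination[where \<tau>=\<tau>, OF flat k \<delta>(1) \<tau>0])
    fix s :: real assume "\<bar>s\<bar> < \<delta>"
    then have s: "s \<in> {-\<delta>..\<delta>}"
      by auto
    then have "\<bar>\<tau> s - 0\<bar> * k \<le> \<bar>F s (\<tau> s) - F s 0\<bar>"
      using root \<epsilon> by (intro expand) auto
    then show "\<bar>\<tau> s\<bar> * k \<le> \<bar>F s 0 - F 0 0\<bar>"
      using root[OF s] unfolding c_def by (simp add: abs_minus_commute)
  qed
  ultimately show ?thesis
    using \<delta> \<tau>0 root unfolding c_def by blast
qed

lemma above_on_small_parallelogram:
  fixes \<phi> :: "'a::real_normed_vector \<Rightarrow> real"
  assumes "isCont \<phi> x" "k < \<phi> x"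
  shows "\<exists>\<epsilon>>0. \<forall>s t. \<bar>s\<bar> \<le> \<epsilon> \<longrightarrow> \<bar>t\<bar> \<le> \<epsilon> \<longrightarrow> k < \<phi> (x + s *\<^sub>R v + t *\<^sub>R a)"
proof -
  obtain r where r: "r > 0" and near: "\<And>y. dist y x < r \<Longrightarrow> dist (\<phi> y) (\<phi> x) < \<phi> x - k"
    using assms unfolding continuous_at_eps_delta by (metis diff_gt_0_iff_gt)
  define N where "N = norm v + norm a + 1"
  define \<epsilon> where "\<epsilon> = r / (2 * N)"
  have N: "N > 0"
    unfolding N_def using norm_ge_zero[of v] norm_ge_zero[of a] by linarith
  have "k < \<phi> (x + s *\<^sub>R v + t *\<^sub>R a)" if "\<bar>s\<bar> \<le> \<epsilon>" "\<bar>t\<bar> \<le> \<epsilon>" for s t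
  proof -
    have "dist (x + s *\<^sub>R v + t *\<^sub>R a) x \<le> \<bar>s\<bar> * norm v + \<bar>t\<bar> * norm a"
      using norm_triangle_ineq[of "s *\<^sub>R v" "t *\<^sub>R a"] by (simp add: dist_norm)
    also have "\<dots> \<le> \<epsilon> * norm v + \<epsilon> * norm a"
      using that by (intro add_mono mult_right_mono) auto
    also have "\<dots> \<le> \<epsilon> * N"
      using that unfolding N_def by (simp add: algebra_simps)
    also have "\<dots> < r"
      unfolding \<epsilon>_def using r N by simp
    finally have "\<bar>\<phi> (x + s *\<^sub>R v + t *\<^sub>R a) - \<phi> x\<bar> < \<phi> x - k"
      using near by (simp add: dist_real_def)
    then show ?thesis
      by linarith
  qed
  moreover have "\<epsilon> > 0"
    unfolding \<epsilon>_def using r N by simp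
  ultimately show ?thesis
    by blast
qed

lemma growth_from_derivative_bound:
  fixes \<phi> \<phi>' :: "real \<Rightarrow> real"
  assumes "t1 \<le> t2"
    and der: "\<And>t. t1 \<le> t \<Longrightarrow> t \<le> t2 \<Longrightarrow> (\<phi> has_real_derivative \<phi>' t) (at t)"
    and lower: "\<And>t. t1 \<le> t \<Longrightarrow> t \<le> t2 \<Longrightarrow> k \<le> \<phi>' t"
  shows "(t2 - t1) * k \<le> \<phi> t2 - \<phi> t1"
proof (cases "t1 = t2")
  case False
  then obtain z where "t1 < z" "z < t2" and mvt: "\<phi> t2 - \<phi> t1 = (t2 - t1) * \<phi>' z"
    using MVT2[of t1 t2 \<phi> \<phi>'] der \<open>t1 \<le> t2\<close> by force
  then show ?thesis
    using lower[of z] \<open>t1 \<le> t2\<close> by (simp add: mult_left_mono)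
qed simp

text \<open>Every vector \<open>v\<close> orthogonal to the gradient at a regular point \<open>x\<close> is the velocity of a
  curve inside the level set of \<open>x\<close>: move along \<open>v\<close> and correct along \<open>g x\<close>, using that \<open>f\<close>
  increases at a uniform rate along \<open>g x\<close> near \<open>x\<close>.\<close>
lemma level_curve_through_regular_point:
  fixes f :: "'a::euclidean_space \<Rightarrow> real" and g :: "'a \<Rightarrow> 'a"
  assumes fd: "\<And>y. (f has_derivative (\<lambda>h. g y \<bullet> h)) (at y)"
    and g_cont: "isCont g x" and regular: "g x \<noteq> 0" and tangent: "v \<bullet> g x = 0"
  shows "\<exists>\<delta>>0. \<exists>P. continuous_on {-\<delta>..\<delta>} P \<and> P 0 = x \<and> (P has_derivative (\<lambda>h. h *\<^sub>R v)) (at 0) \<and>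
           (\<forall>s\<in>{-\<delta>..\<delta>}. f (P s) = f x)"
proof -
  define a where "a = g x"
  define k where "k = (a \<bullet> a) / 2"
  have k: "k > 0" "k < g x \<bullet> a"
    unfolding k_def a_def using regular by simp_all
  moreover have "isCont (\<lambda>y. g y \<bullet> a) x"
    using g_cont by (intro continuous_intros)
  ultimately obtain \<epsilon> where \<epsilon>: "\<epsilon> > 0"
    and steep: "\<And>s t. \<bar>s\<bar> \<le> \<epsilon> \<Longrightarrow> \<bar>t\<bar> \<le> \<epsilon> \<Longrightarrow> k < g (x + s *\<^sub>R v + t *\<^sub>R a) \<bullet> a"
    using above_on_small_parallelogram[where \<phi>="\<lambda>y. g y \<bullet> a" and v=v and a=a] by blast
  define F where "F s t = f (x + s *\<^sub>R v + t *\<^sub>R a)" for s t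
  have F_t: "(F s has_real_derivative (g (x + s *\<^sub>R v + t *\<^sub>R a) \<bullet> a)) (at t)" for s t
    unfolding F_def using derivative_along_line[OF fd, of "x + s *\<^sub>R v" a t] by simp
  have F_s: "((\<lambda>s. F s 0) has_real_derivative 0) (at 0)"
    unfolding F_def using derivative_along_line[OF fd, of x v 0] tangent
    by (simp add: inner_commute)
  have grow: "(t2 - t1) * k \<le> F s t2 - F s t1"
    if "\<bar>s\<bar> \<le> \<epsilon>" "-\<epsilon> \<le> t1" "t1 \<le> t2" "t2 \<le> \<epsilon>" for s t1 t2
    by (intro growth_from_derivative_bound[OF that(3) F_t])
      (use that in \<open>auto intro!: less_imp_le[OF steep]\<close>)
  have "continuous_on UNIV f"
    using fd has_derivative_continuous continuous_at_imp_continuous_on by blast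
  then have F_cont: "continuous_on UNIV (\<lambda>p. F (fst p) (snd p))"
    unfolding F_def by (rule continuous_on_compose2) (auto intro!: continuous_intros)
  obtain \<delta> \<tau> where \<delta>: "\<delta> > 0" and \<tau>_cont: "continuous_on {-\<delta>..\<delta>} \<tau>" and "\<tau> 0 = 0"
    and \<tau>_flat: "(\<tau> has_real_derivative 0) (at 0)" and level: "\<forall>s\<in>{-\<delta>..\<delta>}. F s (\<tau> s) = F 0 0"
    using implicit_function_flat[OF F_cont k(1) \<epsilon> grow F_s] by blast
  define P where "P s = x + s *\<^sub>R v + \<tau> s *\<^sub>R a" for s
  have "(\<tau> has_derivative (\<lambda>h. 0)) (at 0)"
    using \<tau>_flat unfolding has_field_derivative_def by (rule has_derivative_eq_rhs) auto
  then have "(P has_derivative (\<lambda>h. h *\<^sub>R v)) (at 0)"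
    unfolding P_def by (auto intro!: derivative_eq_intros)
  moreover have "continuous_on {-\<delta>..\<delta>} P"
    unfolding P_def by (intro continuous_intros \<tau>_cont)
  moreover have "P 0 = x" "\<forall>s\<in>{-\<delta>..\<delta>}. f (P s) = f x"
    using \<open>\<tau> 0 = 0\<close> level unfolding P_def F_def by simp_all
  ultimately show ?thesis
    using \<delta> by blast
qed

lemma metric_functionE:
  fixes f :: "'a::euclidean_space \<Rightarrow> real" and g :: "'a \<Rightarrow> 'a"
  assumes "metric_function f g"
  obtains H :: "'a \<Rightarrow> ('a \<Rightarrow>\<^sub>L 'a)"
  where "\<And>y. (f has_derivative (\<lambda>h. g y \<bullet> h)) (at y)"
    and "\<And>y. (g has_derivative blinfun_apply (H y)) (at y)"
    and "continuous_on UNIV H"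
    and "\<And>x y. y \<in> connected_component_set {z. f z = f x} x \<Longrightarrow> norm (g y) = norm (g x)"
  using assms unfolding metric_function_def C2_with_gradient_def is_gradient_def by blast

text \<open>If \<open>|g|\<close> is constant on the level component of a regular point \<open>x\<close>, then differentiating
  \<open>|g|\<^sup>2\<close> along a level curve shows that \<open>H x v\<close> is orthogonal to \<open>g x\<close> for tangent \<open>v\<close>.\<close>
lemma gradient_norm_stationary_on_level_tangent:
  fixes f :: "'a::euclidean_space \<Rightarrow> real" and g :: "'a \<Rightarrow> 'a" and H :: "'a \<Rightarrow> ('a \<Rightarrow>\<^sub>L 'a)"
  assumes fd: "\<And>y. (f has_derivative (\<lambda>h. g y \<bullet> h)) (at y)"
    and gd: "\<And>y. (g has_derivative blinfun_apply (H y)) (at y)"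
    and level_norm: "\<And>y. y \<in> connected_component_set {z. f z = f x} x \<Longrightarrow> norm (g y) = norm (g x)"
    and regular: "g x \<noteq> 0" and tangent: "v \<bullet> g x = 0"
  shows "g x \<bullet> H x v = 0"
proof -
  obtain \<delta> P where \<delta>: "\<delta> > 0" and P_cont: "continuous_on {-\<delta>..\<delta>} P" and "P 0 = x"
    and P_der: "(P has_derivative (\<lambda>h. h *\<^sub>R v)) (at 0)" and level: "\<forall>s\<in>{-\<delta>..\<delta>}. f (P s) = f x"
    using level_curve_through_regular_point[OF fd _ regular tangent] has_derivative_continuous[OF gd]
    by blast
  have "P ` {-\<delta>..\<delta>} \<subseteq> connected_component_set {z. f z = f x} x"
  proof (rule connected_component_maximal)
    show "x \<in> P ` {-\<delta>..\<delta>}"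
      using \<open>P 0 = x\<close> \<delta> by force
    show "connected (P ` {-\<delta>..\<delta>})"
      using P_cont by (intro connected_continuous_image) auto
  qed (use level in auto)
  then have norm_const: "g (P s) \<bullet> g (P s) = g x \<bullet> g x" if "s \<in> ball 0 \<delta>" for s
  proof -
    have "s \<in> {-\<delta>..\<delta>}"
      using that by (auto simp: dist_real_def)
    then have "norm (g (P s)) = norm (g x)"
      using level_norm \<open>P ` {-\<delta>..\<delta>} \<subseteq> _\<close> by blast
    then show ?thesis
      by (simp add: dot_square_norm)
  qed
  have "((\<lambda>z. g z \<bullet> g z) has_derivative (\<lambda>w. g x \<bullet> H x w + H x w \<bullet> g x)) (at (P 0))"
    unfolding \<open>P 0 = x\<close> by (auto intro!: derivative_eq_intros gd)
  from has_derivative_compose[OF P_der this]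
  have "((\<lambda>s. g (P s) \<bullet> g (P s)) has_derivative (\<lambda>h. h * (2 * (g x \<bullet> H x v)))) (at 0)"
    by (rule has_derivative_eq_rhs)
      (simp add: fun_eq_iff blinfun.scaleR_right inner_commute[of "H x v"] algebra_simps)
  then have "((\<lambda>s. g x \<bullet> g x) has_derivative (\<lambda>h. h * (2 * (g x \<bullet> H x v)))) (at 0)"
    by (rule has_derivative_transform_within_open[OF _ open_ball[of 0 \<delta>]]) (use \<delta> norm_const in auto)
  then have "(\<lambda>h::real. h * (2 * (g x \<bullet> H x v))) = (\<lambda>h. 0)"
    using has_derivative_unique has_derivative_const by blast
  then show ?thesis
    by (metis mult_1 mult_eq_0_iff zero_neq_numeral)
qed

definition rayleigh :: "('a::real_inner \<Rightarrow>\<^sub>L 'a) \<Rightarrow> 'a \<Rightarrow> real" where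
  "rayleigh A y = (A y \<bullet> y) / (y \<bullet> y)"

lemma abs_rayleigh_le: "\<bar>rayleigh A y\<bar> \<le> norm A"
proof (cases "y = 0")
  case False
  have "\<bar>A y \<bullet> y\<bar> \<le> norm (A y) * norm y"
    by (rule Cauchy_Schwarz_ineq2)
  also have "\<dots> \<le> norm A * norm y * norm y"
    by (rule mult_right_mono[OF norm_blinfun]) simp
  finally have "\<bar>A y \<bullet> y\<bar> \<le> norm A * (y \<bullet> y)"
    by (simp add: dot_square_norm power2_eq_square mult.assoc)
  then show ?thesis
    using False by (simp add: rayleigh_def abs_divide divide_le_eq)
qed (simp add: rayleigh_def)

text \<open>For a metric function the gradient is an eigenvector of the Hessian, with the Rayleigh
  quotient as eigenvalue: the part \<open>w\<close> of \<open>H x (g x)\<close> orthogonal to \<open>g x\<close> satisfies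
  \<open>H x (g x) \<bullet> w = H x w \<bullet> g x = 0\<close> by symmetry and the previous lemma.\<close>
lemma metric_gradient_eigenvector:
  fixes f :: "'a::euclidean_space \<Rightarrow> real" and g :: "'a \<Rightarrow> 'a" and H :: "'a \<Rightarrow> ('a \<Rightarrow>\<^sub>L 'a)"
  assumes fd: "\<And>y. (f has_derivative (\<lambda>h. g y \<bullet> h)) (at y)"
    and gd: "\<And>y. (g has_derivative blinfun_apply (H y)) (at y)"
    and H_cont: "continuous_on UNIV H"
    and level_norm: "\<And>x y. y \<in> connected_component_set {z. f z = f x} x \<Longrightarrow> norm (g y) = norm (g x)"
  shows "H x (g x) = rayleigh (H x) (g x) *\<^sub>R g x"
proof (cases "g x = 0")
  case True
  then show ?thesis
    by simp
next
  case False
  define \<mu> where "\<mu> = rayleigh (H x) (g x)"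
  define w where "w = H x (g x) - \<mu> *\<^sub>R g x"
  have w_tangent: "w \<bullet> g x = 0"
    unfolding w_def \<mu>_def rayleigh_def using False by (simp add: inner_diff_left)
  have "H x (g x) \<bullet> w = H x w \<bullet> g x"
    by (rule hessian_symmetric[OF fd gd H_cont])
  also have "\<dots> = 0"
    using gradient_norm_stationary_on_level_tangent[OF fd gd level_norm False w_tangent]
    by (simp add: inner_commute)
  finally have "H x (g x) \<bullet> w = 0" .
  moreover have "w \<bullet> w = H x (g x) \<bullet> w - \<mu> * (g x \<bullet> w)"
    unfolding w_def by (simp add: inner_diff_left)
  ultimately have "w \<bullet> w = 0"
    using w_tangent by (simp add: inner_commute)
  then show ?thesis
    unfolding w_def \<mu>_def by simp
qed

text \<open>Gronwall-type uniqueness: a nonnegative function with \<open>q' \<le> L q\<close> vanishing at the left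
  end of an interval vanishes at the right end, because \<open>q(t) exp(-L t)\<close> is nonincreasing.\<close>
lemma gronwall_zero_forward:
  fixes q q' :: "real \<Rightarrow> real"
  assumes "a \<le> b"
    and der: "\<And>t. t \<in> {a..b} \<Longrightarrow> (q has_real_derivative q' t) (at t within {a..b})"
    and growth: "\<And>t. t \<in> {a..b} \<Longrightarrow> q' t \<le> L * q t"
    and nonneg: "\<And>t. t \<in> {a..b} \<Longrightarrow> q t \<ge> 0"
    and "q a = 0"
  shows "q b = 0"
proof -
  define r where "r t = q t * exp (- L * (t - a))" for t
  define r' where "r' t = (q' t - L * q t) * exp (- L * (t - a))" for t
  have "(r has_real_derivative r' t) (at t within {a..b})" if "t \<in> {a..b}" for t
    unfolding r_def r'_def by (auto intro!: derivative_eq_intros der[OF that] simp: algebra_simps)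
  then have "\<exists>t\<in>{a..b}. r b - r a = (\<lambda>h. h * r' t) (b - a)"
    by (intro mvt_very_simple[OF \<open>a \<le> b\<close>]) (auto simp: has_field_derivative_def mult_commute_abs)
  then obtain t where "t \<in> {a..b}" "r b - r a = (b - a) * r' t"
    by auto
  moreover have "r' t \<le> 0"
    using growth[OF \<open>t \<in> {a..b}\<close>] unfolding r'_def by (simp add: mult_nonpos_nonneg)
  ultimately have "r b \<le> 0"
    using \<open>a \<le> b\<close> \<open>q a = 0\<close> unfolding r_def by (simp add: mult_nonneg_nonpos)
  then show ?thesis
    using nonneg[of b] \<open>a \<le> b\<close> unfolding r_def by (simp add: mult_le_0_iff)
qed

text \<open>The backward version follows by reversing time.\<close>
lemma gronwall_zero_backward:
  fixes q q' :: "real \<Rightarrow> real"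
  assumes "a \<le> b"
    and der: "\<And>t. t \<in> {a..b} \<Longrightarrow> (q has_real_derivative q' t) (at t within {a..b})"
    and growth: "\<And>t. t \<in> {a..b} \<Longrightarrow> - L * q t \<le> q' t"
    and nonneg: "\<And>t. t \<in> {a..b} \<Longrightarrow> q t \<ge> 0"
    and "q b = 0"
  shows "q a = 0"
proof -
  have image: "uminus ` {-b..-a} = {a..b::real}"
    by simp
  have "(q \<circ> uminus) (-a) = 0"
  proof (rule gronwall_zero_forward[where a="-b" and b="-a" and q'="\<lambda>t. - q' (- t)" and L=L])
    fix t assume t: "t \<in> {-b..-a}"
    have "(q has_real_derivative q' (- t)) (at (- t) within uminus ` {-b..-a})"
      using der[of "- t"] t unfolding image by auto
    from DERIV_image_chain[OF this DERIV_minus[OF DERIV_ident]]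
    show "(q \<circ> uminus has_real_derivative - q' (- t)) (at t within {-b..-a})"
      by simp
    show "- q' (- t) \<le> L * (q \<circ> uminus) t"
      using growth[of "- t"] t by auto
    show "(q \<circ> uminus) t \<ge> 0"
      using nonneg[of "- t"] t by auto
  qed (use assms in auto)
  then show ?thesis
    by simp
qed

lemma linear_ode_vanishing:
  fixes q m B :: "real \<Rightarrow> real"
  assumes I: "is_interval I" and "t0 \<in> I" "q t0 = 0"
    and der: "\<And>t. t \<in> I \<Longrightarrow> (q has_real_derivative m t * q t) (at t within I)"
    and nonneg: "\<And>t. t \<in> I \<Longrightarrow> q t \<ge> 0"
    and bound: "\<And>t. t \<in> I \<Longrightarrow> \<bar>m t\<bar> \<le> B t" and B_cont: "continuous_on I B"
    and "t \<in> I"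
  shows "q t = 0"
proof -
  define J where "J = {min t0 t..max t0 t}"
  have "min t0 t \<in> I" "max t0 t \<in> I"
    using \<open>t0 \<in> I\<close> \<open>t \<in> I\<close> by (simp_all add: min_def max_def)
  then have "J \<subseteq> I"
    unfolding J_def using mem_is_interval_1_I[OF I] by (meson atLeastAtMost_iff subsetI)
  then have "\<exists>s_max\<in>J. \<forall>s\<in>J. B s \<le> B s_max"
    using continuous_on_subset[OF B_cont] by (intro continuous_attains_sup) (auto simp: J_def)
  then obtain s_max where max: "\<And>s. s \<in> J \<Longrightarrow> B s \<le> B s_max"
    by blast
  have est: "\<bar>m s * q s\<bar> \<le> B s_max * q s" if "s \<in> J" for s
  proof -
    have "\<bar>m s\<bar> \<le> B s_max" "q s \<ge> 0"
      using bound[of s] max[of s] nonneg[of s] that \<open>J \<subseteq> I\<close> by auto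
    then show ?thesis
      by (simp add: abs_mult mult_right_mono)
  qed
  have der_J: "(q has_real_derivative m s * q s) (at s within J)" if "s \<in> J" for s
    using DERIV_subset[OF der \<open>J \<subseteq> I\<close>] that \<open>J \<subseteq> I\<close> by blast
  show ?thesis
  proof (cases "t0 \<le> t")
    case True
    then have J: "J = {t0..t}"
      by (simp add: J_def)
    show ?thesis
    proof (rule gronwall_zero_forward[OF True, where q'="\<lambda>s. m s * q s" and L="B s_max"])
      fix s assume "s \<in> {t0..t}"
      then show "(q has_real_derivative m s * q s) (at s within {t0..t})" "q s \<ge> 0"
        "m s * q s \<le> B s_max * q s"
        using der_J[of s] nonneg[of s] abs_le_D1[OF est[of s]] \<open>J \<subseteq> I\<close> unfolding J by auto
    qed (rule \<open>q t0 = 0\<close>)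
  next
    case False
    then have J: "J = {t..t0}"
      by (simp add: J_def)
    show ?thesis
    proof (rule gronwall_zero_backward[where a=t and b=t0 and q'="\<lambda>s. m s * q s" and L="B s_max"])
      fix s assume "s \<in> {t..t0}"
      then show "(q has_real_derivative m s * q s) (at s within {t..t0})" "q s \<ge> 0"
        "- B s_max * q s \<le> m s * q s"
        using der_J[of s] nonneg[of s] abs_le_D2[OF est[of s]] \<open>J \<subseteq> I\<close> unfolding J by auto
    qed (use False \<open>q t0 = 0\<close> in auto)
  qed
qed

definition orth_component :: "'a::real_inner \<Rightarrow> 'a \<Rightarrow> 'a" where
  "orth_component u y = y - ((y \<bullet> u) / (u \<bullet> u)) *\<^sub>R u"

lemma bounded_linear_orth_component: "bounded_linear (orth_component u)"
proof -
  have "bounded_linear (\<lambda>y. y \<bullet> u / (u \<bullet> u))"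
    by (rule bounded_linear_compose[OF bounded_linear_divide bounded_linear_inner_left])
  then show ?thesis
    unfolding orth_component_def by (intro bounded_linear_intros)
qed

lemma orth_component_self: "orth_component u u = 0"
  by (cases "u = 0") (simp_all add: orth_component_def)

lemma orth_component_scaleR: "orth_component u (c *\<^sub>R y) = c *\<^sub>R orth_component u y"
  using linear_cmul[OF bounded_linear.linear[OF bounded_linear_orth_component]] .

lemma orth_component_decomp: "y = orth_component u y + ((y \<bullet> u) / (u \<bullet> u)) *\<^sub>R u"
  by (simp add: orth_component_def)

text \<open>Along a gradient line the gradient never leaves the direction it has at time \<open>t0\<close>: the
  orthogonal part \<open>P\<close> solves \<open>P' = \<mu> P\<close>, so \<open>|P|\<^sup>2\<close> solves \<open>q' = 2 \<mu> q\<close> with \<open>q t0 = 0\<close>.\<close>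
lemma gradient_direction_constant:
  fixes g :: "'a::euclidean_space \<Rightarrow> 'a" and H :: "'a \<Rightarrow> ('a \<Rightarrow>\<^sub>L 'a)"
  assumes gd: "\<And>y. (g has_derivative blinfun_apply (H y)) (at y)"
    and H_cont: "continuous_on UNIV H"
    and eigen: "\<And>y. H y (g y) = rayleigh (H y) (g y) *\<^sub>R g y"
    and line: "gradient_line g I \<gamma>" and "t0 \<in> I" "t \<in> I"
  shows "orth_component (g (\<gamma> t0)) (g (\<gamma> t)) = 0"
proof -
  have I: "is_interval I" and \<gamma>_der: "\<And>t. t \<in> I \<Longrightarrow> (\<gamma> has_vector_derivative g (\<gamma> t)) (at t within I)"
    using line unfolding gradient_line_def by auto
  define \<mu> where "\<mu> t = rayleigh (H (\<gamma> t)) (g (\<gamma> t))" for t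
  define P where "P t = orth_component (g (\<gamma> t0)) (g (\<gamma> t))" for t
  have P_der: "(P has_derivative (\<lambda>h. h *\<^sub>R (\<mu> t *\<^sub>R P t))) (at t within I)" if "t \<in> I" for t
  proof -
    have "((\<lambda>t. g (\<gamma> t)) has_derivative (\<lambda>h. H (\<gamma> t) (h *\<^sub>R g (\<gamma> t)))) (at t within I)"
      using has_derivative_compose[OF \<gamma>_der[OF that, unfolded has_vector_derivative_def] gd] .
    then have "((\<lambda>t. g (\<gamma> t)) has_derivative (\<lambda>h. h *\<^sub>R (\<mu> t *\<^sub>R g (\<gamma> t)))) (at t within I)"
      unfolding \<mu>_def by (simp add: blinfun.scaleR_right eigen[symmetric])
    from bounded_linear.has_derivative[OF bounded_linear_orth_component this]
    show ?thesis
      unfolding P_def by (simp add: orth_component_scaleR)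
  qed
  have q_der: "((\<lambda>t. P t \<bullet> P t) has_real_derivative (2 * \<mu> t) * (P t \<bullet> P t)) (at t within I)"
    if "t \<in> I" for t
    unfolding has_field_derivative_def
    by (rule has_derivative_eq_rhs[OF has_derivative_inner[OF P_der[OF that] P_der[OF that]]])
      (auto simp: fun_eq_iff algebra_simps)
  have "continuous_on I \<gamma>"
    using \<gamma>_der by (auto intro: has_vector_derivative_continuous simp: continuous_on_eq_continuous_within)
  then have "continuous_on I (\<lambda>t. 2 * norm (H (\<gamma> t)))"
    by (intro continuous_intros continuous_on_compose2[OF H_cont]) auto
  moreover have "\<bar>2 * \<mu> t\<bar> \<le> 2 * norm (H (\<gamma> t))" for t
    unfolding \<mu>_def using abs_rayleigh_le[of "H (\<gamma> t)" "g (\<gamma> t)"] by (simp add: abs_mult)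
  moreover have "P t0 \<bullet> P t0 = 0"
    unfolding P_def using orth_component_self by simp
  ultimately have "P t \<bullet> P t = 0"
    using linear_ode_vanishing[OF I \<open>t0 \<in> I\<close> _ q_der _ _ _ \<open>t \<in> I\<close>,
        where B="\<lambda>t. 2 * norm (H (\<gamma> t))"]
    by auto
  then show ?thesis
    unfolding P_def by simp
qed

lemma curve_with_parallel_velocity_is_straight:
  fixes \<gamma> :: "real \<Rightarrow> 'a::euclidean_space"
  assumes I: "is_interval I"
    and der: "\<And>t. t \<in> I \<Longrightarrow> (\<gamma> has_vector_derivative D t) (at t within I)"
    and parallel: "\<And>t. t \<in> I \<Longrightarrow> orth_component u (D t) = 0"
  shows "\<exists>p. \<forall>t\<in>I. \<exists>s. \<gamma> t = p + s *\<^sub>R u"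
proof -
  have "((\<lambda>t. orth_component u (\<gamma> t)) has_derivative (\<lambda>h. 0)) (at t within I)" if "t \<in> I" for t
    using bounded_linear.has_derivative[OF bounded_linear_orth_component[of u]
        der[OF that, unfolded has_vector_derivative_def]]
    by (simp add: orth_component_scaleR parallel[OF that])
  then have "\<exists>p. \<forall>t\<in>I. orth_component u (\<gamma> t) = p"
    by (rule has_derivative_zero_constant[OF is_interval_convex[OF I]])
  then obtain p where p: "\<And>t. t \<in> I \<Longrightarrow> orth_component u (\<gamma> t) = p"
    by blast
  have "\<gamma> t = p + ((\<gamma> t \<bullet> u) / (u \<bullet> u)) *\<^sub>R u" if "t \<in> I" for t
    using orth_component_decomp[of "\<gamma> t" u] p[OF that] by simp
  then show ?thesis
    by blast
qed

theorem theorem1p14: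
  fixes f :: "'a::euclidean_space \<Rightarrow> real" and g :: "'a \<Rightarrow> 'a"
    and \<gamma> :: "real \<Rightarrow> 'a" and I :: "real set"
  assumes "metric_function f g"
    and "gradient_line g I \<gamma>"
    and "\<exists>t\<in>I. g (\<gamma> t) \<noteq> 0"
  shows "\<exists>p v. v \<noteq> 0 \<and> (\<forall>t\<in>I. \<exists>s::real. \<gamma> t = p + s *\<^sub>R v)"
proof -
  obtain H where fd: "\<And>y. (f has_derivative (\<lambda>h. g y \<bullet> h)) (at y)"
    and gd: "\<And>y. (g has_derivative blinfun_apply (H y)) (at y)"
    and H_cont: "continuous_on UNIV H"
    and level_norm: "\<And>x y. y \<in> connected_component_set {z. f z = f x} x \<Longrightarrow> norm (g y) = norm (g x)"
    using metric_functionE[OF assms(1)] by blast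
  have eigen: "\<And>y. H y (g y) = rayleigh (H y) (g y) *\<^sub>R g y"
    by (rule metric_gradient_eigenvector[OF fd gd H_cont level_norm])
  obtain t0 where "t0 \<in> I" and "g (\<gamma> t0) \<noteq> 0"
    using assms(3) by blast
  have "\<exists>p. \<forall>t\<in>I. \<exists>s. \<gamma> t = p + s *\<^sub>R g (\<gamma> t0)"
  proof (rule curve_with_parallel_velocity_is_straight)
    show "is_interval I" "\<And>t. t \<in> I \<Longrightarrow> (\<gamma> has_vector_derivative g (\<gamma> t)) (at t within I)"
      using assms(2) unfolding gradient_line_def by auto
    show "\<And>t. t \<in> I \<Longrightarrow> orth_component (g (\<gamma> t0)) (g (\<gamma> t)) = 0"
      using gradient_direction_constant[OF gd H_cont eigen assms(2) \<open>t0 \<in> I\<close>] by blast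
  qed
  then show ?thesis
    using \<open>g (\<gamma> t0) \<noteq> 0\<close> by blast
qed

end
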